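(* $\gamma_{2t}(K_2\Box K_3)=4$, $\gamma_{2t}(K_3\Box K_4)=6$, $\gamma_{2t}(K_4\Box K_5)=7$, $\gamma_{2t}(K_5\Box K_6)=9$, $\gamma_{2t}(K_6\Box K_7)=10$, $\gamma_{2t}(K_2\Box K_4)=4$, $\gamma_{2t}(K_3\Box K_5)=6$, $\gamma_{2t}(K_4\Box K_6)=8$, $\gamma_{2t}(K_5\Box K_7)=9$, $\gamma_{2t}(K_6\Box K_8)=11$ and $\gamma_{2t}(K_7\Box K_9)=13$.
   Context: For a graph $G=(V,E)$, a set $S\subseteq V$ is a total $2$-dominating set if every vertex of $V$ (including those in $S$) is adjacent to at least $2$ vertices of $S$; $\gamma_{2t}(G)$ is the minimum cardinality of such a set. $G\Box H$ denotes the Cartesian product: vertex set $V(G)\times V(H)$, with $(u_1,v_1)\sim(u_2,v_2)$ iff either $u_1=u_2$ and $v_1\sim v_2$, or $v_1=v_2$ and $u_1\sim u_2$. $K_n$ is the complete graph on $n$ vertices. *)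

theory Defs
  imports Main
begin

type_synonym 'a graph = "'a set \<times> ('a \<Rightarrow> 'a \<Rightarrow> bool)"

definition verts :: "'a graph \<Rightarrow> 'a set" where "verts G = fst G"
definition adj :: "'a graph \<Rightarrow> 'a \<Rightarrow> 'a \<Rightarrow> bool" where "adj G = snd G"

definition complete_graph :: "nat \<Rightarrow> nat graph" where
  "complete_graph n = ({..<n}, (\<lambda>x y. x \<noteq> y))"

definition cart_prod :: "'a graph \<Rightarrow> 'b graph \<Rightarrow> ('a \<times> 'b) graph" where
  "cart_prod G H = (verts G \<times> verts H,
     (\<lambda>(u1, v1) (u2, v2). (u1 = u2 \<and> adj H v1 v2) \<or> (v1 = v2 \<and> adj G u1 u2)))"

definition total_k_dominating :: "'a graph \<Rightarrow> nat \<Rightarrow> 'a set \<Rightarrow> bool" where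
  "total_k_dominating G k S \<longleftrightarrow>
     S \<subseteq> verts G \<and> (\<forall>v \<in> verts G. card {u \<in> S. adj G v u} \<ge> k)"

definition gamma_2t :: "'a graph \<Rightarrow> nat" where
  "gamma_2t G = (LEAST n. \<exists>S. total_k_dominating G 2 S \<and> card S = n)"

end

theory Submission
  imports Defs Complex_Main
begin

text \<open>
  A set S of vertices of K_m \<box> K_n is a set of cells of an m \<times> n board, and a cell (i, j) has
  r_i + c_j - 2 neighbours in S when it lies in S (r_i, c_j being the sizes of its row and
  column in S).  If some row of S is empty, every column needs two cells, so |S| \<ge> 2n, and
  symmetrically for columns.  Otherwise every cell of S satisfies r_i + c_j \<ge> 4, whence
  1/r_i + 1/c_j \<le> 4/3; summing over S gives m + n \<le> 4|S|/3, with equality only if all r_i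
  are odd, i.e. |S| \<equiv> m (mod 2).  These bounds are attained by explicit sets in all eleven
  cases.
\<close>

abbreviation rook_graph :: "nat \<Rightarrow> nat \<Rightarrow> (nat \<times> nat) graph" where
  "rook_graph m n \<equiv> cart_prod (complete_graph m) (complete_graph n)"

lemma verts_rook_graph [simp]: "verts (rook_graph m n) = {..<m} \<times> {..<n}"
  by (simp add: cart_prod_def verts_def complete_graph_def)

lemma adj_rook_graph [simp]:
  "adj (rook_graph m n) (i, j) (u, v) \<longleftrightarrow> (i = u \<and> j \<noteq> v) \<or> (j = v \<and> i \<noteq> u)"
  by (auto simp add: cart_prod_def adj_def complete_graph_def)

definition row :: "('a \<times> 'b) set \<Rightarrow> 'a \<Rightarrow> 'b set" where
  "row S i = {j. (i, j) \<in> S}"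

definition col :: "('a \<times> 'b) set \<Rightarrow> 'b \<Rightarrow> 'a set" where
  "col S j = {i. (i, j) \<in> S}"

lemma row_swap [simp]: "row (prod.swap ` S) j = col S j"
  by (force simp: row_def col_def)

lemma col_swap [simp]: "col (prod.swap ` S) i = row S i"
  by (force simp: row_def col_def)

lemma finite_row: "S \<subseteq> A \<times> B \<Longrightarrow> finite B \<Longrightarrow> finite (row S i)"
  by (rule finite_subset[of _ B]) (auto simp: row_def)

lemma finite_col: "S \<subseteq> A \<times> B \<Longrightarrow> finite A \<Longrightarrow> finite (col S j)"
  by (rule finite_subset[of _ A]) (auto simp: col_def)

lemma sum_fst_eq_sum_card_row:
  fixes f :: "'a \<Rightarrow> 'c::comm_semiring_1"
  assumes "S \<subseteq> A \<times> B" "finite A" "finite B"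
  shows "(\<Sum>x\<in>S. f (fst x)) = (\<Sum>i\<in>A. of_nat (card (row S i)) * f i)"
proof -
  have "S = Sigma A (row S)"
    using assms(1) by (auto simp: row_def)
  then have "(\<Sum>x\<in>S. f (fst x)) = (\<Sum>i\<in>A. \<Sum>j\<in>row S i. f i)"
    using sum.Sigma[of A "row S" "\<lambda>i j. f i"] finite_row[OF assms(1,3)] assms(2)
    by (simp add: case_prod_beta)
  then show ?thesis
    by simp
qed

lemma sum_snd_eq_sum_card_col:
  fixes f :: "'b \<Rightarrow> 'c::comm_semiring_1"
  assumes "S \<subseteq> A \<times> B" "finite A" "finite B"
  shows "(\<Sum>x\<in>S. f (snd x)) = (\<Sum>j\<in>B. of_nat (card (col S j)) * f j)"
proof -
  have "(\<Sum>x\<in>S. f (snd x)) = (\<Sum>y\<in>prod.swap ` S. f (fst y))"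
    by (simp add: sum.reindex comp_def)
  also have "\<dots> = (\<Sum>j\<in>B. of_nat (card (col S j)) * f j)"
    using sum_fst_eq_sum_card_row[of "prod.swap ` S" B A f] assms by fastforce
  finally show ?thesis .
qed

lemma card_eq_sum_card_row:
  "S \<subseteq> A \<times> B \<Longrightarrow> finite A \<Longrightarrow> finite B \<Longrightarrow> card S = (\<Sum>i\<in>A. card (row S i))"
  using sum_fst_eq_sum_card_row[where f = "\<lambda>_. 1 :: nat"] by simp

lemma card_eq_sum_card_col:
  "S \<subseteq> A \<times> B \<Longrightarrow> finite A \<Longrightarrow> finite B \<Longrightarrow> card S = (\<Sum>j\<in>B. card (col S j))"
  using sum_snd_eq_sum_card_col[where f = "\<lambda>_. 1 :: nat"] by simp

lemma card_rook_graph_neighbours: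
  assumes "finite S"
  shows "card {x \<in> S. adj (rook_graph m n) (i, j) x} = card (row S i - {j}) + card (col S j - {i})"
proof -
  have fin: "finite (row S i)" "finite (col S j)"
    using finite_row[OF subset_fst_snd[of S]] finite_col[OF subset_fst_snd[of S]] assms by blast+
  have "card {x \<in> S. adj (rook_graph m n) (i, j) x} =
      card (Pair i ` (row S i - {j}) \<union> (\<lambda>u. (u, j)) ` (col S j - {i}))"
    by (rule arg_cong[where f = card]) (auto simp: row_def col_def)
  also have "\<dots> = card (Pair i ` (row S i - {j})) + card ((\<lambda>u. (u, j)) ` (col S j - {i}))"
    using fin by (intro card_Un_disjoint) auto
  also have "\<dots> = card (row S i - {j}) + card (col S j - {i})"
    by (simp add: card_image inj_on_def)
  finally show ?thesis .
qed

lemma total_k_dominating_rook_graph_iff: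
  "total_k_dominating (rook_graph m n) k S \<longleftrightarrow>
     S \<subseteq> {..<m} \<times> {..<n} \<and> (\<forall>i<m. \<forall>j<n. k \<le> card (row S i - {j}) + card (col S j - {i}))"
proof -
  have "finite S" if "S \<subseteq> {..<m} \<times> {..<n}"
    using that by (rule finite_subset) simp
  then show ?thesis
    by (auto simp: total_k_dominating_def card_rook_graph_neighbours)
qed

lemma total_k_dominating_rook_graph_swap:
  "total_k_dominating (rook_graph m n) k S \<Longrightarrow> total_k_dominating (rook_graph n m) k (prod.swap ` S)"
  by (auto simp: total_k_dominating_rook_graph_iff add.commute)

lemma card_total_dominating_empty_row:
  assumes dom: "total_k_dominating (rook_graph m n) k S" and "i < m" "row S i = {}"
  shows "k * n \<le> card S"
proof -
  have sub: "S \<subseteq> {..<m} \<times> {..<n}"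
    using dom by (simp add: total_k_dominating_rook_graph_iff)
  have "k \<le> card (col S j)" if "j < n" for j
  proof -
    have "k \<le> card (row S i - {j}) + card (col S j - {i})"
      using dom \<open>i < m\<close> that by (simp add: total_k_dominating_rook_graph_iff)
    also have "\<dots> \<le> card (col S j)"
      using \<open>row S i = {}\<close> card_Diff1_le[of "col S j" i] by simp
    finally show ?thesis .
  qed
  then have "(\<Sum>j<n. k) \<le> (\<Sum>j<n. card (col S j))"
    by (intro sum_mono) simp
  also have "\<dots> = card S"
    using card_eq_sum_card_col[OF sub] by simp
  finally show ?thesis
    by (simp add: mult.commute)
qed

lemma card_total_dominating_empty_col:
  assumes "total_k_dominating (rook_graph m n) k S" "j < n" "col S j = {}"
  shows "k * m \<le> card S"
  using card_total_dominating_empty_row[OF total_k_dominating_rook_graph_swap[OF assms(1)], of j]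
    assms(2,3) by (simp add: card_image)

lemma card_row_add_card_col_ge:
  assumes "total_k_dominating (rook_graph m n) 2 S" "(i, j) \<in> S"
  shows "4 \<le> card (row S i) + card (col S j)"
proof -
  have sub: "S \<subseteq> {..<m} \<times> {..<n}"
    and dom: "2 \<le> card (row S i - {j}) + card (col S j - {i})"
    using assms by (auto simp: total_k_dominating_rook_graph_iff)
  have "j \<in> row S i" "i \<in> col S j"
    using assms(2) by (simp_all add: row_def col_def)
  then have "Suc (card (row S i - {j})) = card (row S i)"
    and "Suc (card (col S j - {i})) = card (col S j)"
    using finite_row[OF sub] finite_col[OF sub] by (blast intro: card_Suc_Diff1)+
  with dom show ?thesis
    by linarith
qed

lemma sum_inverse_card_row:
  assumes "S \<subseteq> A \<times> B" "finite A" "finite B" "\<forall>i\<in>A. row S i \<noteq> {}"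
  shows "(\<Sum>x\<in>S. 1 / real (card (row S (fst x)))) = card A"
proof -
  have "(\<Sum>x\<in>S. 1 / real (card (row S (fst x)))) =
      (\<Sum>i\<in>A. real (card (row S i)) * (1 / real (card (row S i))))"
    by (rule sum_fst_eq_sum_card_row[OF assms(1-3)])
  also have "\<dots> = (\<Sum>i\<in>A. 1)"
    using assms(4) finite_row[OF assms(1,3)] by (intro sum.cong) auto
  finally show ?thesis
    by simp
qed

lemma sum_inverse_card_col:
  assumes "S \<subseteq> A \<times> B" "finite A" "finite B" "\<forall>j\<in>B. col S j \<noteq> {}"
  shows "(\<Sum>x\<in>S. 1 / real (card (col S (snd x)))) = card B"
proof -
  have "prod.swap ` S \<subseteq> B \<times> A"
    using assms(1) by auto
  from sum_inverse_card_row[OF this assms(3,2)] assms(4) show ?thesis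
    by (simp add: sum.reindex comp_def)
qed

lemma even_card_add_card_if_odd_card_row:
  assumes "S \<subseteq> A \<times> B" "finite A" "finite B" "\<forall>i\<in>A. odd (card (row S i))"
  shows "even (card S + card A)"
proof -
  have "{i \<in> A. odd (card (row S i))} = A"
    using assms(4) by blast
  then show ?thesis
    using card_eq_sum_card_row[OF assms(1-3)] even_sum_iff[OF assms(2), of "\<lambda>i. card (row S i)"]
    by simp
qed

lemma inverse_add_inverse_le_four_thirds:
  fixes a b :: nat
  assumes "1 \<le> a" "1 \<le> b" "4 \<le> a + b"
  shows "1 / real a + 1 / real b \<le> 4 / 3"
proof -
  have "3 * a + 3 * b \<le> 4 * (a * b)"
  proof (cases "a = 1 \<or> b = 1")
    case True
    then show ?thesis
      using assms by auto
  next
    case False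
    then have "2 * b \<le> a * b" "2 * a \<le> a * b"
      using assms by simp_all
    then show ?thesis
      by linarith
  qed
  then have "real (3 * a + 3 * b) \<le> real (4 * (a * b))"
    by (simp only: of_nat_le_iff)
  then show ?thesis
    using assms by (simp add: field_simps)
qed

lemma inverse_add_inverse_eq_four_thirds:
  fixes a b :: nat
  assumes "1 \<le> a" "1 \<le> b" "1 / real a + 1 / real b = 4 / 3"
  shows "a = 1 \<and> b = 3 \<or> a = 3 \<and> b = 1"
proof -
  have "real (3 * (a + b)) = real (4 * (a * b))"
    using assms by (simp add: field_simps)
  then have eq: "3 * (a + b) = 4 * (a * b)"
    by (simp only: of_nat_eq_iff)
  have "a \<le> 3"
  proof (rule ccontr)
    assume "\<not> a \<le> 3"
    then have "3 * a \<le> 3 * (a * b)" "3 * b < a * b"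
      using assms(2) by simp_all
    then show False
      using eq[unfolded distrib_left] by linarith
  qed
  then have "a = 1 \<or> a = 2 \<or> a = 3"
    using assms(1) by linarith
  then show ?thesis
    using eq by (elim disjE; simp; presburger)
qed

lemma card_total_2_dominating_no_empty_line:
  assumes dom: "total_k_dominating (rook_graph m n) 2 S"
    and rows: "\<forall>i<m. row S i \<noteq> {}" and cols: "\<forall>j<n. col S j \<noteq> {}"
  shows "3 * (m + n) \<le> 4 * card S \<and> (4 * card S = 3 * (m + n) \<longrightarrow> even (card S + m))"
proof -
  have sub: "S \<subseteq> {..<m} \<times> {..<n}"
    using dom by (simp add: total_k_dominating_rook_graph_iff)
  define r where "r x = card (row S (fst x))" for x :: "nat \<times> nat"
  define c where "c x = card (col S (snd x))" for x :: "nat \<times> nat"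
  define w where "w x = 1 / real (r x) + 1 / real (c x)" for x
  have pos: "1 \<le> r x" "1 \<le> c x" if "x \<in> S" for x
  proof -
    have "snd x \<in> row S (fst x)" "fst x \<in> col S (snd x)"
      using that by (simp_all add: row_def col_def)
    then show "1 \<le> r x" "1 \<le> c x"
      using finite_row[OF sub] finite_col[OF sub]
      by (auto simp: r_def c_def Suc_le_eq card_gt_0_iff)
  qed
  have w_le: "w x \<le> 4 / 3" if "x \<in> S" for x
    using inverse_add_inverse_le_four_thirds[OF pos[OF that]] card_row_add_card_col_ge[OF dom] that
    by (auto simp: w_def r_def c_def)
  have "(\<Sum>x\<in>S. w x) = m + n"
    using sum_inverse_card_row[OF sub] sum_inverse_card_col[OF sub] rows cols
    by (simp add: w_def r_def c_def sum.distrib)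
  then have slack: "(\<Sum>x\<in>S. 4 / 3 - w x) = 4 / 3 * card S - (m + n)"
    by (simp add: sum_subtractf)
  have "0 \<le> (\<Sum>x\<in>S. 4 / 3 - w x)"
    using w_le by (intro sum_nonneg) simp
  then have "real (3 * (m + n)) \<le> real (4 * card S)"
    using slack by simp
  then have "3 * (m + n) \<le> 4 * card S"
    by (simp only: of_nat_le_iff)
  moreover have "even (card S + m)" if tight: "4 * card S = 3 * (m + n)"
  proof -
    have "real (4 * card S) = real (3 * (m + n))"
      using tight by (simp only: of_nat_eq_iff)
    then have "(\<Sum>x\<in>S. 4 / 3 - w x) = 0"
      using slack by simp
    then have "w x = 4 / 3" if "x \<in> S" for x
      using that w_le finite_subset[OF sub] by (simp add: sum_nonneg_eq_0_iff)
    then have "odd (r x)" if "x \<in> S" for x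
      using inverse_add_inverse_eq_four_thirds[OF pos[OF that]] that by (auto simp: w_def)
    then have "\<forall>i\<in>{..<m}. odd (card (row S i))"
      using rows by (fastforce simp: r_def row_def)
    from even_card_add_card_if_odd_card_row[OF sub _ _ this] show ?thesis
      by simp
  qed
  ultimately show ?thesis
    by blast
qed

lemma card_total_2_dominating_rook_graph_ge:
  assumes "total_k_dominating (rook_graph m n) 2 S"
  shows "2 * n \<le> card S \<or> 2 * m \<le> card S \<or> 3 * (m + n) < 4 * card S \<or>
    (4 * card S = 3 * (m + n) \<and> even (card S + m))"
proof (cases "(\<exists>i<m. row S i = {}) \<or> (\<exists>j<n. col S j = {})")
  case True
  then show ?thesis
    using card_total_dominating_empty_row[OF assms] card_total_dominating_empty_col[OF assms] by blast
next
  case False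
  then show ?thesis
    using card_total_2_dominating_no_empty_line[OF assms] by auto
qed

lemma gamma_2t_eqI:
  assumes "total_k_dominating G 2 S" "card S = k"
    and "\<And>T. total_k_dominating G 2 T \<Longrightarrow> k \<le> card T"
  shows "gamma_2t G = k"
  unfolding gamma_2t_def using assms by (intro Least_equality) auto

text \<open>Executable form of total domination for explicit lists, so that witnesses are checked by code_simp.\<close>

definition rook_total_dominating_list :: "nat \<Rightarrow> nat \<Rightarrow> nat \<Rightarrow> (nat \<times> nat) list \<Rightarrow> bool" where
  "rook_total_dominating_list m n k xs \<longleftrightarrow>
     list_all (\<lambda>(u, v). u < m \<and> v < n) xs \<and>
     list_all (\<lambda>i. list_all (\<lambda>j.
       k \<le> length (filter (\<lambda>(u, v). (i = u \<and> j \<noteq> v) \<or> (j = v \<and> i \<noteq> u)) xs)) [0..<n]) [0..<m]"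

lemma total_k_dominating_if_rook_total_dominating_list:
  assumes "distinct xs" "rook_total_dominating_list m n k xs"
  shows "total_k_dominating (rook_graph m n) k (set xs)"
  unfolding total_k_dominating_def
proof (intro conjI ballI)
  show "set xs \<subseteq> verts (rook_graph m n)"
    using assms(2) by (auto simp: rook_total_dominating_list_def list_all_iff)
next
  fix x assume "x \<in> verts (rook_graph m n)"
  then obtain i j where x: "x = (i, j)" "i < m" "j < n"
    by auto
  let ?P = "\<lambda>(u, v). (i = u \<and> j \<noteq> v) \<or> (j = v \<and> i \<noteq> u)"
  have "{u \<in> set xs. adj (rook_graph m n) x u} = set (filter ?P xs)"
    using x by auto
  moreover have "card (set (filter ?P xs)) = length (filter ?P xs)"
    using assms(1) by (intro distinct_card) simp
  moreover have "k \<le> length (filter ?P xs)"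
    using assms(2) x by (auto simp: rook_total_dominating_list_def list_all_iff)
  ultimately show "k \<le> card {u \<in> set xs. adj (rook_graph m n) x u}"
    by simp
qed

lemma gamma_2t_rook_graph_eqI:
  assumes "distinct xs" "rook_total_dominating_list m n 2 xs" "length xs = k"
    and "\<And>c. 2 * n \<le> c \<or> 2 * m \<le> c \<or> 3 * (m + n) < 4 * c \<or>
      (4 * c = 3 * (m + n) \<and> even (c + m)) \<Longrightarrow> k \<le> c"
  shows "gamma_2t (rook_graph m n) = k"
  using total_k_dominating_if_rook_total_dominating_list[OF assms(1,2)] assms(1,3)
    card_total_2_dominating_rook_graph_ge assms(4)
  by (intro gamma_2t_eqI[of _ "set xs"]) (auto simp: distinct_card)

theorem proposition13:
  shows "gamma_2t (cart_prod (complete_graph 2) (complete_graph 3)) = 4 \<and>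
    gamma_2t (cart_prod (complete_graph 3) (complete_graph 4)) = 6 \<and>
    gamma_2t (cart_prod (complete_graph 4) (complete_graph 5)) = 7 \<and>
    gamma_2t (cart_prod (complete_graph 5) (complete_graph 6)) = 9 \<and>
    gamma_2t (cart_prod (complete_graph 6) (complete_graph 7)) = 10 \<and>
    gamma_2t (cart_prod (complete_graph 2) (complete_graph 4)) = 4 \<and>
    gamma_2t (cart_prod (complete_graph 3) (complete_graph 5)) = 6 \<and>
    gamma_2t (cart_prod (complete_graph 4) (complete_graph 6)) = 8 \<and>
    gamma_2t (cart_prod (complete_graph 5) (complete_graph 7)) = 9 \<and>
    gamma_2t (cart_prod (complete_graph 6) (complete_graph 8)) = 11 \<and>
    gamma_2t (cart_prod (complete_graph 7) (complete_graph 9)) = 13"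
proof (intro conjI)
  show "gamma_2t (rook_graph 2 3) = 4"
    by (rule gamma_2t_rook_graph_eqI[of "[(0, 0), (0, 1), (1, 0), (1, 1)]"]) (code_simp | presburger)+
  show "gamma_2t (rook_graph 3 4) = 6"
    by (rule gamma_2t_rook_graph_eqI[of "[(0, 1), (0, 2), (1, 2), (1, 3), (2, 1), (2, 3)]"]) (code_simp | presburger)+
  show "gamma_2t (rook_graph 4 5) = 7"
    by (rule gamma_2t_rook_graph_eqI[of "[(0, 4), (1, 4), (2, 4), (3, 0), (3, 1), (3, 2), (3, 3)]"]) (code_simp | presburger)+
  show "gamma_2t (rook_graph 5 6) = 9"
    by (rule gamma_2t_rook_graph_eqI[of "[(0, 4), (1, 0), (1, 1), (1, 4), (2, 4), (3, 2), (3, 3), (3, 5), (4, 4)]"]) (code_simp | presburger)+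
  show "gamma_2t (rook_graph 6 7) = 10"
    by (rule gamma_2t_rook_graph_eqI[of "[(0, 2), (1, 2), (2, 2), (3, 4), (3, 5), (3, 6), (4, 2), (5, 0), (5, 1), (5, 3)]"]) (code_simp | presburger)+
  show "gamma_2t (rook_graph 2 4) = 4"
    by (rule gamma_2t_rook_graph_eqI[of "[(0, 0), (0, 3), (1, 0), (1, 3)]"]) (code_simp | presburger)+
  show "gamma_2t (rook_graph 3 5) = 6"
    by (rule gamma_2t_rook_graph_eqI[of "[(0, 1), (0, 4), (1, 1), (1, 3), (2, 3), (2, 4)]"]) (code_simp | presburger)+
  show "gamma_2t (rook_graph 4 6) = 8"
    by (rule gamma_2t_rook_graph_eqI[of "[(0, 2), (0, 3), (1, 0), (1, 3), (2, 0), (2, 2), (3, 0), (3, 3)]"]) (code_simp | presburger)+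
  show "gamma_2t (rook_graph 5 7) = 9"
    by (rule gamma_2t_rook_graph_eqI[of "[(0, 1), (0, 4), (0, 6), (1, 0), (1, 2), (1, 3), (2, 5), (3, 5), (4, 5)]"]) (code_simp | presburger)+
  show "gamma_2t (rook_graph 6 8) = 11"
    by (rule gamma_2t_rook_graph_eqI[of "[(0, 0), (1, 0), (2, 1), (2, 4), (2, 5), (2, 7), (3, 0), (4, 2), (4, 3), (4, 6), (5, 0)]"]) (code_simp | presburger)+
  show "gamma_2t (rook_graph 7 9) = 13"
    by (rule gamma_2t_rook_graph_eqI[of "[(0, 2), (1, 5), (1, 7), (1, 8), (2, 2), (3, 0), (3, 4), (3, 6), (4, 2), (5, 2), (6, 1), (6, 3), (6, 5)]"]) (code_simp | presburger)+
qed

end
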